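(* Let $A$ be an $n\times n$ matrix over $\mathbb{C}$ (or $\mathbb{R}$) with $A^3\neq 0$. Then $A^2\otimes A=A\otimes A^2$ if and only if $A^2\otimes A^3\otimes A=A\otimes A^3\otimes A^2$.
   Context: Here $\otimes$ denotes the Kronecker product of matrices: for $A=[a_{ij}]$, $A\otimes B$ is the block matrix whose $(i,j)$ block is $a_{ij}B$. *)

theory Defs
  imports "Jordan_Normal_Form.Matrix"
begin

definition kron :: "'a::times mat \<Rightarrow> 'a mat \<Rightarrow> 'a mat" where
  "kron A B = mat (dim_row A * dim_row B) (dim_col A * dim_col B)
     (\<lambda>(i, j). A $$ (i div dim_row B, j div dim_col B) * B $$ (i mod dim_row B, j mod dim_col B))"

end

theory Submission
  imports Defs
begin

text \<open>Entrywise, a threefold Kronecker identity X \<otimes> Y \<otimes> Z = X' \<otimes> Y \<otimes> Z' says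
  x_ab y_cd z_ef = x'_ab y_cd z'_ef for all indices. Choosing (c, d) with y_cd \<noteq> 0, which exists
  as soon as Y \<noteq> 0, the middle factor cancels over an integral domain, leaving the entrywise form
  of X \<otimes> Z = X' \<otimes> Z'. Apply this with Y = A^3.\<close>

lemma mult_add_less_mult:
  fixes a c m p :: nat
  assumes "a < m" "c < p"
  shows "a * p + c < m * p"
proof -
  have "a * p + c < Suc a * p"
    using assms(2) by simp
  also have "\<dots> \<le> m * p"
    using assms(1) by (intro mult_le_mono1) simp
  finally show ?thesis .
qed

lemma all_less_mult_iff:
  fixes m p :: nat
  shows "(\<forall>i < m * p. P i) \<longleftrightarrow> (\<forall>a < m. \<forall>c < p. P (a * p + c))" (is "?L \<longleftrightarrow> ?R")
proof
  assume ?R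
  show ?L
  proof (intro allI impI)
    fix i assume "i < m * p"
    then have "p > 0"
      by (cases p) simp_all
    with \<open>i < m * p\<close> have "i div p < m" "i mod p < p"
      by (simp_all add: less_mult_imp_div_less)
    with \<open>?R\<close> show "P i"
      by (metis div_mult_mod_eq)
  qed
qed (simp add: mult_add_less_mult)

lemma kron_carrier_mat [simp, intro]:
  "A \<in> carrier_mat m n \<Longrightarrow> B \<in> carrier_mat p q \<Longrightarrow> kron A B \<in> carrier_mat (m * p) (n * q)"
  unfolding kron_def by simp

lemma index_kron_block:
  assumes "A \<in> carrier_mat m n" "B \<in> carrier_mat p q"
    and "a < m" "b < n" "c < p" "d < q"
  shows "kron A B $$ (a * p + c, b * q + d) = A $$ (a, b) * B $$ (c, d)"
  using assms mult_add_less_mult[of a m c p] mult_add_less_mult[of b n d q]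
  unfolding kron_def by simp

lemma kron_eq_kron_iff:
  assumes "A \<in> carrier_mat m n" "A' \<in> carrier_mat m n" "B \<in> carrier_mat p q" "B' \<in> carrier_mat p q"
  shows "kron A B = kron A' B' \<longleftrightarrow>
    (\<forall>a < m. \<forall>b < n. \<forall>c < p. \<forall>d < q. A $$ (a, b) * B $$ (c, d) = A' $$ (a, b) * B' $$ (c, d))"
proof -
  have "kron A B = kron A' B' \<longleftrightarrow>
      (\<forall>i < m * p. \<forall>j < n * q. kron A B $$ (i, j) = kron A' B' $$ (i, j))"
    using kron_carrier_mat[OF assms(1,3)] kron_carrier_mat[OF assms(2,4)]
    by (auto simp: mat_eq_iff)
  also have "\<dots> \<longleftrightarrow> (\<forall>a < m. \<forall>c < p. \<forall>b < n. \<forall>d < q.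
      kron A B $$ (a * p + c, b * q + d) = kron A' B' $$ (a * p + c, b * q + d))"
    unfolding all_less_mult_iff ..
  finally show ?thesis
    by (auto simp: index_kron_block[OF assms(1,3)] index_kron_block[OF assms(2,4)])
qed

lemma kron_kron_eq_kron_kron_iff:
  assumes "X \<in> carrier_mat m n" "X' \<in> carrier_mat m n" "Y \<in> carrier_mat p q" "Y' \<in> carrier_mat p q"
    and "Z \<in> carrier_mat r s" "Z' \<in> carrier_mat r s"
  shows "kron (kron X Y) Z = kron (kron X' Y') Z' \<longleftrightarrow>
    (\<forall>a < m. \<forall>b < n. \<forall>c < p. \<forall>d < q. \<forall>e < r. \<forall>f < s.
      X $$ (a, b) * Y $$ (c, d) * Z $$ (e, f) = X' $$ (a, b) * Y' $$ (c, d) * Z' $$ (e, f))"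
proof -
  have "kron (kron X Y) Z = kron (kron X' Y') Z' \<longleftrightarrow>
      (\<forall>i < m * p. \<forall>j < n * q. \<forall>e < r. \<forall>f < s.
        kron X Y $$ (i, j) * Z $$ (e, f) = kron X' Y' $$ (i, j) * Z' $$ (e, f))"
    using assms by (intro kron_eq_kron_iff) auto
  then show ?thesis
    using assms by (auto simp: all_less_mult_iff index_kron_block)
qed

lemma kron_kron_cancel_middle:
  fixes Y :: "'a::idom mat"
  assumes "X \<in> carrier_mat m n" "X' \<in> carrier_mat m n" "Y \<in> carrier_mat p q"
    and "Z \<in> carrier_mat r s" "Z' \<in> carrier_mat r s"
    and "Y \<noteq> 0\<^sub>m p q"
  shows "kron (kron X Y) Z = kron (kron X' Y) Z' \<longleftrightarrow> kron X Z = kron X' Z'"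
proof -
  obtain c0 d0 where "c0 < p" "d0 < q" "Y $$ (c0, d0) \<noteq> 0"
    using assms(3,6) by (auto simp: mat_eq_iff)
  then have "(\<forall>a < m. \<forall>b < n. \<forall>c < p. \<forall>d < q. \<forall>e < r. \<forall>f < s.
      X $$ (a, b) * Y $$ (c, d) * Z $$ (e, f) = X' $$ (a, b) * Y $$ (c, d) * Z' $$ (e, f)) \<longleftrightarrow>
    (\<forall>a < m. \<forall>b < n. \<forall>e < r. \<forall>f < s.
      X $$ (a, b) * Z $$ (e, f) = X' $$ (a, b) * Z' $$ (e, f))"
    by (auto simp: ac_simps) blast
  then show ?thesis
    using assms by (simp add: kron_kron_eq_kron_kron_iff kron_eq_kron_iff)
qed

theorem lemma2p5:
  fixes A :: "complex mat"
  assumes "A \<in> carrier_mat n n"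
    and "A ^\<^sub>m 3 \<noteq> 0\<^sub>m n n"
  shows "kron (A ^\<^sub>m 2) A = kron A (A ^\<^sub>m 2) \<longleftrightarrow>
         kron (kron (A ^\<^sub>m 2) (A ^\<^sub>m 3)) A = kron (kron A (A ^\<^sub>m 3)) (A ^\<^sub>m 2)"
proof -
  have "A ^\<^sub>m 2 \<in> carrier_mat n n" "A ^\<^sub>m 3 \<in> carrier_mat n n"
    using assms(1) by simp_all
  from kron_kron_cancel_middle[OF this(1) assms(1) this(2) assms(1) this(1) assms(2)]
  show ?thesis ..
qed

end
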